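(* Let $\mathcal C=\mathcal C(I,A,(\rho_i)_{i\in I},(C^a)_{a\in A})$ be a connected Cartan scheme and $\mathcal R=\mathcal R(\mathcal C,(R^a)_{a\in A})$ a root system of type $\mathcal C$. Let $a\in A$ and $i,j\in I$ with $m^a_{i,j}=3$. Then $c^{\rho_i(a)}_{il}+c^{\rho_i(a)}_{jl}=c^{\rho_i\rho_j(a)}_{il}+c^{\rho_i\rho_j(a)}_{jl}$ for all $l\in I$.
   Context: Let $I$ be a nonempty finite set and $\{\alpha_i\mid i\in I\}$ the standard basis of $\mathbb Z^I$; $\mathbb N_0=\{0,1,2,\dots\}$. A generalized Cartan matrix is $C=(c_{ij})_{i,j\in I}\in\mathbb Z^{I\times I}$ with $c_{ii}=2$, $c_{jk}\le0$ for $j\ne k$, and $c_{ij}=0\Rightarrow c_{ji}=0$. A Cartan scheme $\mathcal C=\mathcal C(I,A,(\rho_i)_{i\in I},(C^a)_{a\in A})$ consists of a nonempty set $A$, maps $\rho_i:A\to A$ and generalized Cartan matrices $C^a=(c^a_{jk})_{j,k\in I}$ such that (C1) $\rho_i^2=\mathrm{id}$ and (C2) $c^a_{ij}=c^{\rho_i(a)}_{ij}$ for all $a\in A$, $i,j\in I$. It is connected if the group generated by the $\rho_i$ acts transitively on $A$. For $i\in I$, $a\in A$ let $\sigma_i^a\in\mathrm{Aut}(\mathbb Z^I)$, $\sigma_i^a(\alpha_j)=\alpha_j-c^a_{ij}\alpha_i$. A root system of type $\mathcal C$ is a family $\mathcal R=\mathcal R(\mathcal C,(R^a)_{a\in A})$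 of subsets $R^a\subset\mathbb Z^I$ such that, writing $R^a_+=R^a\cap\mathbb N_0^I$ and $m^a_{i,j}=|R^a\cap(\mathbb N_0\alpha_i+\mathbb N_0\alpha_j)|$, for all $a\in A$, $i,j\in I$: (R1) $R^a=R^a_+\cup(-R^a_+)$; (R2) $R^a\cap\mathbb Z\alpha_i=\{\alpha_i,-\alpha_i\}$; (R3) $\sigma_i^a(R^a)=R^{\rho_i(a)}$; (R4) if $i\neq j$ and $m^a_{i,j}$ is finite then $(\rho_i\rho_j)^{m^a_{i,j}}(a)=a$. *)

theory Defs
  imports Main
begin

text \<open>Index set I is the finite type 'i (nonempty automatically); Z^I is 'i \<Rightarrow> int.
 The object set A is the type 'a (nonempty automatically).\<close>

definition alpha :: "'i \<Rightarrow> ('i \<Rightarrow> int)" where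
  "alpha i = (\<lambda>k. if k = i then 1 else 0)"

definition gen_cartan_matrix :: "('i \<Rightarrow> 'i \<Rightarrow> int) \<Rightarrow> bool" where
  "gen_cartan_matrix c \<longleftrightarrow>
     (\<forall>i. c i i = 2) \<and> (\<forall>j k. j \<noteq> k \<longrightarrow> c j k \<le> 0) \<and>
     (\<forall>i j. c i j = 0 \<longrightarrow> c j i = 0)"

definition cartan_scheme :: "('i::finite \<Rightarrow> 'a \<Rightarrow> 'a) \<Rightarrow> ('a \<Rightarrow> 'i \<Rightarrow> 'i \<Rightarrow> int) \<Rightarrow> bool" where
  "cartan_scheme rho C \<longleftrightarrow>
     (\<forall>a. gen_cartan_matrix (C a)) \<and>
     (\<forall>i a. rho i (rho i a) = a) \<and>
     (\<forall>a i j. C a i j = C (rho i a) i j)"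

text \<open>Connected: the group generated by the rho_i acts transitively. Since each rho_i
 is an involution, the orbit of a is the set of points reachable by finitely many rho_i steps.\<close>
definition connected_scheme :: "('i \<Rightarrow> 'a \<Rightarrow> 'a) \<Rightarrow> bool" where
  "connected_scheme rho \<longleftrightarrow> (\<forall>a b. (a, b) \<in> {(x, rho i x) | x i. True}\<^sup>*)"

definition sigma :: "('a \<Rightarrow> 'i \<Rightarrow> 'i \<Rightarrow> int) \<Rightarrow> 'i::finite \<Rightarrow> 'a \<Rightarrow> ('i \<Rightarrow> int) \<Rightarrow> ('i \<Rightarrow> int)" where
  "sigma C i a v = (\<lambda>k. if k = i then v k - (\<Sum>j\<in>UNIV. C a i j * v j) else v k)"

definition pos_roots :: "('a \<Rightarrow> ('i \<Rightarrow> int) set) \<Rightarrow> 'a \<Rightarrow> ('i \<Rightarrow> int) set" where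
  "pos_roots R a = R a \<inter> {v. \<forall>k. 0 \<le> v k}"

definition m_ij :: "('a \<Rightarrow> ('i \<Rightarrow> int) set) \<Rightarrow> 'a \<Rightarrow> 'i \<Rightarrow> 'i \<Rightarrow> nat" where
  "m_ij R a i j = card (R a \<inter> {v. \<exists>p q::nat. v = (\<lambda>k. int p * alpha i k + int q * alpha j k)})"

definition finite_m :: "('a \<Rightarrow> ('i \<Rightarrow> int) set) \<Rightarrow> 'a \<Rightarrow> 'i \<Rightarrow> 'i \<Rightarrow> bool" where
  "finite_m R a i j = finite (R a \<inter> {v. \<exists>p q::nat. v = (\<lambda>k. int p * alpha i k + int q * alpha j k)})"

definition root_system ::
  "('i::finite \<Rightarrow> 'a \<Rightarrow> 'a) \<Rightarrow> ('a \<Rightarrow> 'i \<Rightarrow> 'i \<Rightarrow> int) \<Rightarrow> ('a \<Rightarrow> ('i \<Rightarrow> int) set) \<Rightarrow> bool" where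
  "root_system rho C R \<longleftrightarrow> cartan_scheme rho C \<and>
     (\<forall>a. R a = pos_roots R a \<union> uminus ` pos_roots R a) \<and>
     (\<forall>a i. R a \<inter> {v. \<exists>z::int. v = (\<lambda>k. z * alpha i k)} = {alpha i, - alpha i}) \<and>
     (\<forall>a i. sigma C i a ` R a = R (rho i a)) \<and>
     (\<forall>a i j. i \<noteq> j \<and> finite_m R a i j \<longrightarrow> ((rho i \<circ> rho j) ^^ m_ij R a i j) a = a)"

end

theory Submission
  imports Defs
begin

text \<open>Only axioms (R1)--(R3) are needed. If \<open>m\<^sup>a\<^sub>i\<^sub>j = 3\<close>, the positive roots of \<open>R\<^sup>a\<close> in
 \<open>\<nat>\<^sub>0\<alpha>\<^sub>i + \<nat>\<^sub>0\<alpha>\<^sub>j\<close> are \<open>\<alpha>\<^sub>i\<close>, \<open>\<alpha>\<^sub>j\<close> and a single mixed root. Reflecting \<open>\<alpha>\<^sub>j\<close> from \<open>\<rho>\<^sub>i(a)\<close>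
 and \<open>\<alpha>\<^sub>i\<close> from \<open>\<rho>\<^sub>j(a)\<close> yields the mixed roots \<open>\<alpha>\<^sub>j - c\<^sub>i\<^sub>j\<alpha>\<^sub>i\<close> and \<open>\<alpha>\<^sub>i - c\<^sub>j\<^sub>i\<alpha>\<^sub>j\<close>, which
 must therefore coincide, so \<open>c\<^sub>i\<^sub>j = c\<^sub>j\<^sub>i = -1\<close>; sign coherence of roots propagates this to the
 neighbours \<open>\<rho>\<^sub>i(a)\<close>, \<open>\<rho>\<^sub>j(a)\<close>. Reflecting \<open>\<alpha>\<^sub>l\<close> successively by \<open>\<sigma>\<^sub>j, \<sigma>\<^sub>i, \<sigma>\<^sub>j, \<sigma>\<^sub>i, \<sigma>\<^sub>j\<close> and
 reading off the sign of the \<open>\<alpha>\<^sub>j\<close>-coefficient shows that \<open>c\<^sub>i\<^sub>l + c\<^sub>j\<^sub>l\<close> cannot increase along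
 \<open>x \<mapsto> \<rho>\<^sub>i\<rho>\<^sub>j\<rho>\<^sub>i(x)\<close>. This map interchanges \<open>\<rho>\<^sub>i(a)\<close> and \<open>\<rho>\<^sub>i\<rho>\<^sub>j(a)\<close>, so the two sums agree.\<close>

definition lincomb :: "'i \<Rightarrow> int \<Rightarrow> 'i \<Rightarrow> int \<Rightarrow> 'i \<Rightarrow> int \<Rightarrow> 'i \<Rightarrow> int" where
  "lincomb l z i m j n = (\<lambda>k. z * alpha l k + m * alpha i k + n * alpha j k)"

abbreviation lincomb2 :: "'i \<Rightarrow> int \<Rightarrow> 'i \<Rightarrow> int \<Rightarrow> 'i \<Rightarrow> int" where
  "lincomb2 i m j n \<equiv> lincomb i 0 i m j n"

lemma lincomb_swap: "lincomb l z i m j n = lincomb l z j n i m"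
  by (simp add: lincomb_def algebra_simps)

lemma lincomb2_swap: "lincomb2 i m j n = lincomb2 j n i m"
  by (simp add: lincomb_def algebra_simps)

lemma lincomb_apply:
  "i \<noteq> j \<Longrightarrow> lincomb l 0 i m j n i = m"
  "i \<noteq> j \<Longrightarrow> lincomb l 0 i m j n j = n"
  "l \<noteq> j \<Longrightarrow> i \<noteq> j \<Longrightarrow> lincomb l z i m j n j = n"
  "l \<noteq> i \<Longrightarrow> l \<noteq> j \<Longrightarrow> lincomb l z i m j n l = z"
  by (auto simp: lincomb_def alpha_def)

lemma sum_times_alpha: "(\<Sum>k\<in>UNIV. c k * alpha i k) = c (i::'i::finite)"
  by (simp add: alpha_def if_distrib cong: if_cong)

lemma sum_times_lincomb:
  "(\<Sum>k\<in>UNIV. c k * lincomb l z i m j n k) = z * c l + m * c i + n * c (j::'i::finite)"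
proof -
  have "(\<Sum>k\<in>UNIV. c k * lincomb l z i m j n k)
      = (\<Sum>k\<in>UNIV. z * (c k * alpha l k) + m * (c k * alpha i k) + n * (c k * alpha j k))"
    by (simp add: lincomb_def algebra_simps)
  then show ?thesis
    by (simp add: sum.distrib sum_distrib_left[symmetric] sum_times_alpha)
qed

lemma sigma_lincomb:
  fixes C :: "'a \<Rightarrow> 'i::finite \<Rightarrow> 'i \<Rightarrow> int"
  assumes "z = 0 \<or> l \<noteq> i" "i \<noteq> j"
  shows "sigma C i x (lincomb l z i m j n)
    = lincomb l z i (m - (z * C x i l + m * C x i i + n * C x i j)) j n"
  using assms unfolding sigma_def sum_times_lincomb by (auto simp: lincomb_def alpha_def fun_eq_iff)

definition pos_roots2 :: "('a \<Rightarrow> ('i \<Rightarrow> int) set) \<Rightarrow> 'a \<Rightarrow> 'i \<Rightarrow> 'i \<Rightarrow> ('i \<Rightarrow> int) set" where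
  "pos_roots2 R a i j = R a \<inter> {v. \<exists>p q::nat. v = (\<lambda>k. int p * alpha i k + int q * alpha j k)}"

lemma m_ij_pos_roots2: "m_ij R a i j = card (pos_roots2 R a i j)"
  and finite_m_pos_roots2: "finite_m R a i j \<longleftrightarrow> finite (pos_roots2 R a i j)"
  by (simp_all add: m_ij_def finite_m_def pos_roots2_def)

lemma mem_pos_roots2_iff:
  "v \<in> pos_roots2 R a i j \<longleftrightarrow> v \<in> R a \<and> (\<exists>m n. 0 \<le> m \<and> 0 \<le> n \<and> v = lincomb2 i m j n)"
proof -
  have "(\<exists>p q::nat. v = (\<lambda>k. int p * alpha i k + int q * alpha j k))
    \<longleftrightarrow> (\<exists>m n. 0 \<le> m \<and> 0 \<le> n \<and> v = (\<lambda>k. m * alpha i k + n * alpha j k))"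
  proof
    assume "\<exists>p q::nat. v = (\<lambda>k. int p * alpha i k + int q * alpha j k)"
    then show "\<exists>m n. 0 \<le> m \<and> 0 \<le> n \<and> v = (\<lambda>k. m * alpha i k + n * alpha j k)"
      using of_nat_0_le_iff by blast
  next
    assume "\<exists>m n. 0 \<le> m \<and> 0 \<le> n \<and> v = (\<lambda>k. m * alpha i k + n * alpha j k)"
    then obtain m n where "0 \<le> m" "0 \<le> n" "v = (\<lambda>k. m * alpha i k + n * alpha j k)"
      by blast
    then show "\<exists>p q::nat. v = (\<lambda>k. int p * alpha i k + int q * alpha j k)"
      by (intro exI[of _ "nat m"] exI[of _ "nat n"]) simp
  qed
  then show ?thesis
    by (simp add: pos_roots2_def lincomb_def)
qed

lemma lincomb2_mem_pos_roots2:
  "lincomb2 i m j n \<in> R a \<Longrightarrow> 0 \<le> m \<Longrightarrow> 0 \<le> n \<Longrightarrow> lincomb2 i m j n \<in> pos_roots2 R a i j"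
  unfolding mem_pos_roots2_iff by blast

locale cartan_root_system =
  fixes rho :: "'i::finite \<Rightarrow> 'a \<Rightarrow> 'a"
    and C :: "'a \<Rightarrow> 'i \<Rightarrow> 'i \<Rightarrow> int"
    and R :: "'a \<Rightarrow> ('i \<Rightarrow> int) set"
  assumes root_system: "root_system rho C R"
begin

lemma cartan_scheme: "cartan_scheme rho C"
  using root_system unfolding root_system_def by blast

lemma rho_rho [simp]: "rho i (rho i x) = x"
  using cartan_scheme by (simp add: cartan_scheme_def)

lemma cartan_rho [simp]: "C (rho i x) i j = C x i j"
  using cartan_scheme by (metis cartan_scheme_def)

lemma cartan_diag [simp]: "C x i i = 2"
  using cartan_scheme by (simp add: cartan_scheme_def gen_cartan_matrix_def)

lemma cartan_offdiag_nonpos: "i \<noteq> j \<Longrightarrow> C x i j \<le> 0"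
  using cartan_scheme by (simp add: cartan_scheme_def gen_cartan_matrix_def)

lemma cartan_zero_sym: "C x i j = 0 \<Longrightarrow> C x j i = 0"
  using cartan_scheme by (simp add: cartan_scheme_def gen_cartan_matrix_def)

lemma roots_sign_coherent:
  assumes "v \<in> R x"
  shows "(\<forall>k. 0 \<le> v k) \<or> (\<forall>k. v k \<le> 0)"
proof -
  have "R x = pos_roots R x \<union> uminus ` pos_roots R x"
    using root_system unfolding root_system_def by (elim conjE allE)
  with assms have "v \<in> pos_roots R x \<union> uminus ` pos_roots R x"
    by simp
  then show ?thesis
    by (auto simp: pos_roots_def)
qed

lemma root_nonneg_if_pos: "v \<in> R x \<Longrightarrow> 0 < v k \<Longrightarrow> 0 \<le> v k'"
  using roots_sign_coherent[of v x] by (meson not_le order.trans)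

lemma root_nonpos_if_neg: "v \<in> R x \<Longrightarrow> v k < 0 \<Longrightarrow> v k' \<le> 0"
  using roots_sign_coherent[of v x] by (meson not_le order.trans)

lemma roots_on_simple_line: "R x \<inter> {v. \<exists>z. v = (\<lambda>k. z * alpha i k)} = {alpha i, - alpha i}"
  using root_system unfolding root_system_def by (elim conjE allE)

lemma simple_root_mem: "alpha i \<in> R x"
  using roots_on_simple_line[of x i] by (metis Int_iff insertI1)

lemma root_multiple_of_simple: "(\<lambda>k. z * alpha i k) \<in> R x \<Longrightarrow> z = 1 \<or> z = -1"
proof -
  assume "(\<lambda>k. z * alpha i k) \<in> R x"
  then have "(\<lambda>k. z * alpha i k) \<in> R x \<inter> {v. \<exists>z. v = (\<lambda>k. z * alpha i k)}"
    by blast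
  then have "(\<lambda>k. z * alpha i k) \<in> {alpha i, - alpha i}"
    by (simp only: roots_on_simple_line)
  then show ?thesis
    by (auto dest: fun_cong[of _ _ i] simp: alpha_def)
qed

lemma lincomb_reflect_fst:
  assumes "lincomb l z i m j n \<in> R x" "z = 0 \<or> l \<noteq> i" "i \<noteq> j"
    and "m' = - m - z * C x i l - n * C x i j" "y = rho i x"
  shows "lincomb l z i m' j n \<in> R y"
proof -
  have "sigma C i x ` R x = R (rho i x)"
    using root_system unfolding root_system_def by (elim conjE allE)
  then have "sigma C i x (lincomb l z i m j n) \<in> R y"
    using assms(1,5) by (metis imageI)
  moreover have "m - (z * C x i l + m * C x i i + n * C x i j) = m'"
    using assms(4) by simp
  ultimately show ?thesis
    by (simp only: sigma_lincomb[OF assms(2,3)])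
qed

lemma lincomb_reflect_snd:
  assumes "lincomb l z i m j n \<in> R x" "z = 0 \<or> l \<noteq> j" "i \<noteq> j"
    and "n' = - n - z * C x j l - m * C x j i" "y = rho j x"
  shows "lincomb l z i m j n' \<in> R y"
  using lincomb_reflect_fst[of l z j n i m] assms by (simp add: lincomb_swap)

lemma simple_roots_mem_pos_roots2: "alpha i \<in> pos_roots2 R x i j" "alpha j \<in> pos_roots2 R x i j"
proof -
  have "alpha i = (\<lambda>k. int 1 * alpha i k + int 0 * alpha j k)"
    and "alpha j = (\<lambda>k. int 0 * alpha i k + int 1 * alpha j k)"
    by simp_all
  then show "alpha i \<in> pos_roots2 R x i j" "alpha j \<in> pos_roots2 R x i j"
    using simple_root_mem unfolding pos_roots2_def by blast+
qed

lemma m_ij_diag: "m_ij R x i i = 1"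
proof -
  have "pos_roots2 R x i i = {alpha i}"
  proof (intro equalityI subsetI)
    fix v
    assume "v \<in> pos_roots2 R x i i"
    then obtain m n where v: "v \<in> R x" "0 \<le> m" "0 \<le> n" "v = lincomb2 i m i n"
      by (auto simp: mem_pos_roots2_iff)
    have v_line: "v = (\<lambda>k. (m + n) * alpha i k)"
      using v(4) by (simp add: lincomb_def algebra_simps)
    then have "m + n = 1"
      using root_multiple_of_simple v(1-3) by fastforce
    with v_line show "v \<in> {alpha i}"
      by simp
  qed (simp add: simple_roots_mem_pos_roots2)
  then show ?thesis
    by (simp add: m_ij_pos_roots2)
qed

lemma cartan_neg_if_mixed_root:
  assumes "lincomb2 i m j n \<in> R x" "i \<noteq> j" "0 < m" "0 < n"
  shows "C x i j < 0"
proof -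
  have "lincomb2 i (- m - n * C x i j) j n \<in> R (rho i x)"
    by (rule lincomb_reflect_fst[OF assms(1)]) (simp_all add: assms(2))
  then have "0 \<le> lincomb2 i (- m - n * C x i j) j n i"
    by (rule root_nonneg_if_pos[of _ _ j]) (simp add: lincomb_apply assms(2,4))
  then have "0 \<le> - m - n * C x i j"
    by (simp add: lincomb_apply assms(2))
  with assms(3,4) show ?thesis
    by (smt (verit) mult_nonneg_nonneg)
qed

lemma reflected_simple_root_mem:
  assumes "i \<noteq> j"
  shows "lincomb2 i (- C x i j) j 1 \<in> R x"
proof -
  have "lincomb2 i 0 j 1 \<in> R (rho i x)"
    using simple_root_mem[of j] by (simp add: lincomb_def)
  then show ?thesis
    by (rule lincomb_reflect_fst) (simp_all add: assms)
qed

lemma nonsimple_pos_root2_mixed: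
  assumes "lincomb2 i m j n \<in> R x" "0 \<le> m" "0 \<le> n"
    and "lincomb2 i m j n \<noteq> alpha i" "lincomb2 i m j n \<noteq> alpha j"
  shows "0 < m" "0 < n"
proof -
  show "0 < m"
  proof (rule ccontr)
    assume "\<not> 0 < m"
    then have line: "lincomb2 i m j n = (\<lambda>k. n * alpha j k)"
      using assms(2) by (simp add: lincomb_def)
    with assms(1) have "n = 1 \<or> n = -1"
      by (metis root_multiple_of_simple)
    with assms(3,5) line show False
      by auto
  qed
  show "0 < n"
  proof (rule ccontr)
    assume "\<not> 0 < n"
    then have line: "lincomb2 i m j n = (\<lambda>k. m * alpha i k)"
      using assms(3) by (simp add: lincomb_def)
    with assms(1) have "m = 1 \<or> m = -1"
      by (metis root_multiple_of_simple)
    with assms(2,4) line show False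
      by auto
  qed
qed

lemma nonsimple_pos_roots2_singleton:
  assumes "finite_m R x i j" "m_ij R x i j = 3" "i \<noteq> j"
  obtains \<beta> where "pos_roots2 R x i j - {alpha i, alpha j} = {\<beta>}"
proof -
  have "alpha i \<noteq> alpha j"
    using assms(3) by (auto simp: alpha_def fun_eq_iff)
  then have "card (pos_roots2 R x i j - {alpha i, alpha j}) = 1"
    using assms(1,2) simple_roots_mem_pos_roots2
    by (simp add: finite_m_pos_roots2 m_ij_pos_roots2 card_Diff_subset)
  then show ?thesis
    using that by (rule card_1_singletonE)
qed

lemma cartan_neg_if_m_ij_3:
  assumes "finite_m R x i j" "m_ij R x i j = 3" "i \<noteq> j"
  shows "C x i j < 0" "C x j i < 0"
proof -
  obtain \<beta> where "pos_roots2 R x i j - {alpha i, alpha j} = {\<beta>}"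
    using nonsimple_pos_roots2_singleton[OF assms] .
  then have "\<beta> \<in> pos_roots2 R x i j" "\<beta> \<noteq> alpha i" "\<beta> \<noteq> alpha j"
    by auto
  then obtain m n where mn: "lincomb2 i m j n \<in> R x" "0 \<le> m" "0 \<le> n"
      "lincomb2 i m j n \<noteq> alpha i" "lincomb2 i m j n \<noteq> alpha j"
    unfolding mem_pos_roots2_iff by blast
  have "lincomb2 j n i m \<in> R x"
    using mn(1) by (subst lincomb2_swap)
  then show "C x i j < 0" "C x j i < 0"
    using cartan_neg_if_mixed_root mn(1) assms(3) nonsimple_pos_root2_mixed[OF mn] by blast+
qed

lemma cartan_A2_if_m_ij_3:
  assumes "finite_m R x i j" "m_ij R x i j = 3"
  shows "i \<noteq> j" "C x i j = -1" "C x j i = -1"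
proof -
  show ij: "i \<noteq> j"
    using assms(2) m_ij_diag by auto
  have neg: "C x i j < 0" "C x j i < 0"
    using cartan_neg_if_m_ij_3[OF assms ij] by simp_all
  obtain \<beta> where \<beta>: "pos_roots2 R x i j - {alpha i, alpha j} = {\<beta>}"
    using nonsimple_pos_roots2_singleton[OF assms ij] .
  define u v where "u = lincomb2 i (- C x i j) j 1" and "v = lincomb2 i 1 j (- C x j i)"
  have coords: "u i = - C x i j" "u j = 1" "v i = 1" "v j = - C x j i"
    using ij by (simp_all add: u_def v_def lincomb_apply)
  have "u \<in> R x" "v \<in> R x"
    using reflected_simple_root_mem[OF ij, of x] reflected_simple_root_mem[OF ij[symmetric], of x]
    by (simp_all add: u_def v_def lincomb2_swap[of j])
  then have "u \<in> pos_roots2 R x i j" "v \<in> pos_roots2 R x i j"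
    using neg by (simp_all add: u_def v_def lincomb2_mem_pos_roots2)
  moreover have "u j \<noteq> alpha i j" "u i \<noteq> alpha j i" "v j \<noteq> alpha i j" "v i \<noteq> alpha j i"
    using coords ij neg by (simp_all add: alpha_def)
  then have "u \<noteq> alpha i" "u \<noteq> alpha j" "v \<noteq> alpha i" "v \<noteq> alpha j"
    by auto
  ultimately have "u \<in> {\<beta>}" "v \<in> {\<beta>}"
    unfolding \<beta>[symmetric] by simp_all
  then have "u i = v i" "u j = v j"
    by simp_all
  then show "C x i j = -1" "C x j i = -1"
    using coords by simp_all
qed

lemma cartan_A2_rho_fst:
  assumes "i \<noteq> j" "C x i j = -1" "C x j i = -1"
  shows "C (rho i x) j i = -1"
proof -
  define b where "b = rho i x"
  have "C b i j = -1"
    using assms(2) by (simp add: b_def)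
  then have "C b j i \<noteq> 0"
    using cartan_zero_sym by force
  then have upper: "C b j i \<le> -1"
    using cartan_offdiag_nonpos[OF assms(1)[symmetric], of b] by linarith
  have "lincomb2 i 1 j 0 \<in> R (rho j b)"
    using simple_root_mem[of i] by (simp add: lincomb_def)
  then have "lincomb2 i 1 j (- C b j i) \<in> R b"
    by (rule lincomb_reflect_snd) (simp_all add: assms(1))
  then have "lincomb2 i (-1 - C b j i) j (- C b j i) \<in> R x"
    by (rule lincomb_reflect_fst) (simp_all add: assms(1,2) b_def)
  then have "lincomb2 i (-1 - C b j i) j (-1) \<in> R (rho j x)"
    by (rule lincomb_reflect_snd) (simp_all add: assms(1,3) algebra_simps)
  then have "lincomb2 i (-1 - C b j i) j (-1) i \<le> 0"
    by (rule root_nonpos_if_neg[of _ _ j]) (simp add: assms(1) lincomb_apply)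
  with upper show ?thesis
    by (simp add: assms(1) lincomb_apply b_def)
qed

lemma cartan_A2_rho:
  assumes "i \<noteq> j" "C x i j = -1" "C x j i = -1"
  shows "C (rho i x) i j = -1" "C (rho i x) j i = -1"
    and "C (rho j x) i j = -1" "C (rho j x) j i = -1"
  using assms cartan_A2_rho_fst[of i j x] cartan_A2_rho_fst[of j i x] by simp_all

lemma cartan_sum_braid_le:
  assumes ij: "i \<noteq> j" and A2: "C x i j = -1" "C x j i = -1"
  shows "C (rho i (rho j (rho i x))) i l + C (rho i (rho j (rho i x))) j l \<le> C x i l + C x j l"
proof -
  define x1 x2 x3 where "x1 = rho i x" and "x2 = rho j x1" and "x3 = rho i x2"
  have A2': "C x1 i j = -1" "C x1 j i = -1" "C x2 i j = -1" "C x2 j i = -1"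
      "C x3 i j = -1" "C x3 j i = -1"
    using cartan_A2_rho ij A2 unfolding x1_def x2_def x3_def by metis+
  consider "l = i" | "l = j" | "l \<noteq> i" "l \<noteq> j"
    by blast
  then show ?thesis
  proof cases
    case 3
    have "lincomb l 1 i 0 j 0 \<in> R (rho j x)"
      using simple_root_mem[of l] by (simp add: lincomb_def)
    then have "lincomb l 1 i 0 j (- C x j l) \<in> R x"
      by (rule lincomb_reflect_snd) (simp_all add: 3 ij)
    then have "lincomb l 1 i (- C x i l - C x j l) j (- C x j l) \<in> R x1"
      by (rule lincomb_reflect_fst) (simp_all add: 3 ij A2 x1_def)
    then have "lincomb l 1 i (- C x i l - C x j l) j (- C x i l - C x1 j l) \<in> R x2"
      by (rule lincomb_reflect_snd) (simp_all add: 3 ij A2' x2_def)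
    then have "lincomb l 1 i (C x j l - C x2 i l - C x1 j l) j (- C x i l - C x1 j l) \<in> R x3"
      by (rule lincomb_reflect_fst) (simp_all add: 3 ij A2' x3_def)
    then have "lincomb l 1 i (C x j l - C x2 i l - C x1 j l) j
        (C x i l + C x j l - C x2 i l - C x3 j l) \<in> R (rho j x3)"
      by (rule lincomb_reflect_snd) (simp_all add: 3 ij A2')
    then have "0 \<le> lincomb l 1 i (C x j l - C x2 i l - C x1 j l) j
        (C x i l + C x j l - C x2 i l - C x3 j l) j"
      by (rule root_nonneg_if_pos[of _ _ l]) (simp add: 3 lincomb_apply)
    then have "0 \<le> C x i l + C x j l - C x2 i l - C x3 j l"
      by (simp add: 3 ij lincomb_apply)
    moreover have "C x3 i l = C x2 i l"
      by (simp add: x3_def)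
    ultimately show ?thesis
      unfolding x3_def x2_def x1_def by linarith
  qed (simp_all add: A2 A2'[unfolded x3_def x2_def x1_def])
qed

end

theorem lemma4p9:
  fixes rho :: "'i::finite \<Rightarrow> 'a \<Rightarrow> 'a"
    and C :: "'a \<Rightarrow> 'i \<Rightarrow> 'i \<Rightarrow> int"
    and R :: "'a \<Rightarrow> ('i \<Rightarrow> int) set"
  assumes "cartan_scheme rho C"
    and "connected_scheme rho"
    and "root_system rho C R"
    and "finite_m R a i j"
    and "m_ij R a i j = 3"
  shows "\<forall>l. C (rho i a) i l + C (rho i a) j l
            = C (rho i (rho j a)) i l + C (rho i (rho j a)) j l"
proof
  fix l
  interpret cartan_root_system rho C R
    by unfold_locales (rule assms(3))
  have ij: "i \<noteq> j" and A2: "C a i j = -1" "C a j i = -1"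
    using cartan_A2_if_m_ij_3[OF assms(4,5)] by blast+
  define b d where "b = rho i a" and "d = rho i (rho j a)"
  have A2_b: "C b i j = -1" "C b j i = -1"
    using cartan_A2_rho[OF ij A2] by (simp_all add: b_def)
  have A2_d: "C d i j = -1" "C d j i = -1"
    using cartan_A2_rho[OF ij A2] cartan_A2_rho[OF ij] unfolding d_def by metis+
  have "rho i (rho j (rho i b)) = d" "rho i (rho j (rho i d)) = b"
    by (simp_all add: b_def d_def)
  then have "C d i l + C d j l \<le> C b i l + C b j l" "C b i l + C b j l \<le> C d i l + C d j l"
    using cartan_sum_braid_le[OF ij A2_b] cartan_sum_braid_le[OF ij A2_d] by metis+
  then show "C (rho i a) i l + C (rho i a) j l = C (rho i (rho j a)) i l + C (rho i (rho j a)) j l"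
    unfolding b_def d_def by linarith
qed

end
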